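(* Let $q\ge3$ be a prime power, $n\ge1$, and let $C\subseteq\mathbb{F}_q^n$ be a linear code of dimension $t$. Then $C\in\mathcal{A}^H_q(n)$ if and only if $C=C_q(n,S)$ for some $S\subseteq\{1,\dots,n\}$ with $|S|=t$.
   Context: For $v\in\mathbb{F}_q^n$, $\mathrm{wt}(v):=|\{i:v_i\ne0\}|$ and $\mathrm{maxwt}(C):=\max\{\mathrm{wt}(c):c\in C\}$. $\mathcal{A}^H_q(n)$ is the set of linear codes $C\subseteq\mathbb{F}_q^n$ with $\dim_{\mathbb{F}_q}(C)=\mathrm{maxwt}(C)$. For $S\subseteq\{1,\dots,n\}$, the free code is $C_q(n,S):=\{v\in\mathbb{F}_q^n: v_i=0\ \text{for all } i\notin S\}$. *)

theory Defs
  imports "HOL-Analysis.Analysis"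
begin

text \<open>Vectors in F_q^n are elements of type 'a ^ 'n (index type 'n with CARD('n) = n).
  Linear codes are subspaces w.r.t. the scalar multiplication (*s).\<close>

definition wt :: "'a::zero ^ 'n \<Rightarrow> nat" where
  "wt v = card {i. v $ i \<noteq> 0}"

definition maxwt :: "('a::zero ^ 'n) set \<Rightarrow> nat" where
  "maxwt C = Max (wt ` C)"

definition A_H :: "('a::{field,finite} ^ 'n) set set" where
  "A_H = {C. vec.subspace C \<and> vec.dim C = maxwt C}"

definition free_code :: "'n set \<Rightarrow> ('a::zero ^ 'n) set" where
  "free_code S = {v. \<forall>i. i \<notin> S \<longrightarrow> v $ i = 0}"

end

theory Submission
  imports Defs
begin

text \<open>Let \<open>c \<in> C\<close> have maximal weight and support \<open>T\<close>. No nonzero codeword can vanish on \<open>T\<close>,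
  since adding it to \<open>c\<close> would enlarge the support; so restriction to \<open>T\<close> is injective on \<open>C\<close>,
  and as \<open>dim C = |T|\<close> it is onto \<open>C\<^sub>q(n,T)\<close>. A preimage \<open>e\<close> of the unit vector at \<open>i \<in> T\<close>
  lies in \<open>C\<^sub>q(n,T)\<close>: otherwise, for a scalar \<open>\<lambda> \<notin> {0, -c\<^sub>i/e\<^sub>i}\<close> (available as \<open>q \<ge> 3\<close>),
  \<open>c + \<lambda>e\<close> would again have support strictly larger than \<open>T\<close>. Hence \<open>C\<close> contains all unit
  vectors of \<open>T\<close>, and comparing dimensions gives \<open>C = C\<^sub>q(n,T)\<close>.\<close>

definition supp :: "'a::zero ^ 'n \<Rightarrow> 'n set" where
  "supp v = {i. v $ i \<noteq> 0}"

lemma wt_eq_card_supp: "wt v = card (supp v)"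
  by (simp add: wt_def supp_def)

lemma free_code_subspace: "vec.subspace (free_code S :: ('a::field ^ 'n) set)"
  unfolding vec.subspace_def free_code_def by auto

lemma dim_free_code: "vec.dim (free_code S :: ('a::field ^ 'n) set) = card S"
  unfolding free_code_def by (rule dim_substandard_cart)

lemma free_code_subset_span_axes:
  "free_code S \<subseteq> vec.span ((\<lambda>i. axis i (1::'a::field)) ` S :: ('a ^ 'n) set)"
proof
  fix x :: "'a ^ 'n" assume x: "x \<in> free_code S"
  have "x = (\<Sum>i\<in>UNIV. x $ i *s axis i 1)"
    by (rule basis_expansion[symmetric])
  also have "\<dots> = (\<Sum>i\<in>S. x $ i *s axis i 1)"
    by (rule sum.mono_neutral_cong_right) (use x in \<open>auto simp: free_code_def\<close>)
  also have "\<dots> \<in> vec.span ((\<lambda>i. axis i 1) ` S)"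
    by (simp add: vec.span_sum vec.span_clauses)
  finally show "x \<in> vec.span ((\<lambda>i. axis i 1) ` S)" .
qed

lemma finite_wt_image: "finite (wt ` (C :: ('a::zero ^ 'n) set))"
  by (rule finite_subset[of _ "{..CARD('n)}"]) (auto simp: wt_def card_mono)

lemma wt_le_maxwt: "v \<in> C \<Longrightarrow> wt v \<le> maxwt C"
  unfolding maxwt_def by (simp add: finite_wt_image)

lemma maxwt_attained:
  fixes C :: "('a::zero ^ 'n) set"
  assumes "C \<noteq> {}"
  obtains c where "c \<in> C" "wt c = maxwt C"
proof -
  have "maxwt C \<in> wt ` C"
    unfolding maxwt_def using assms by (intro Max_in finite_wt_image) auto
  then show ?thesis
    using that by (metis imageE)
qed

lemma supp_not_psubset_maxwt:
  assumes "v \<in> C" and "wt c = maxwt C"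
  shows "\<not> supp c \<subset> supp v"
proof
  assume "supp c \<subset> supp v"
  then have "wt c < wt v"
    by (simp add: wt_eq_card_supp psubset_card_mono)
  with wt_le_maxwt[OF assms(1)] assms(2) show False by simp
qed

lemma maxwt_free_code: "maxwt (free_code S :: ('a::zero_neq_one ^ 'n) set) = card S"
proof (rule antisym)
  have "wt v \<le> card S" if "v \<in> free_code S" for v :: "'a ^ 'n"
    using that unfolding free_code_def wt_def by (auto intro!: card_mono)
  moreover have "0 \<in> free_code S"
    by (simp add: free_code_def)
  ultimately show "maxwt (free_code S :: ('a ^ 'n) set) \<le> card S"
    by (metis maxwt_attained empty_iff)
  let ?v = "\<chi> i. if i \<in> S then (1::'a) else 0"
  have "?v \<in> free_code S" and "wt ?v = card S"
    by (simp_all add: free_code_def wt_def)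
  then show "card S \<le> maxwt (free_code S :: ('a ^ 'n) set)"
    by (metis wt_le_maxwt)
qed

lemma free_code_in_A_H: "free_code S \<in> (A_H :: ('a::{field,finite} ^ 'n) set set)"
  unfolding A_H_def by (simp add: free_code_subspace dim_free_code maxwt_free_code)

definition restrict_coords :: "'n set \<Rightarrow> 'a::zero ^ 'n \<Rightarrow> 'a ^ 'n" where
  "restrict_coords S v = (\<chi> i. if i \<in> S then v $ i else 0)"

lemma linear_restrict_coords:
  "Vector_Spaces.linear (*s) (*s) (restrict_coords S :: 'a::field ^ 'n \<Rightarrow> _)"
  unfolding Vector_Spaces.linear_iff restrict_coords_def
  by (auto simp: vec_eq_iff vec.vector_space_axioms)

lemma restrict_coords_in_free_code: "restrict_coords S v \<in> free_code S"
  by (simp add: restrict_coords_def free_code_def)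

lemma restrict_coords_free_code: "v \<in> free_code S \<Longrightarrow> restrict_coords S v = v"
  by (auto simp: restrict_coords_def free_code_def vec_eq_iff)

context
  fixes C :: "('a::{field,finite} ^ 'n) set" and c :: "'a ^ 'n"
  assumes C_A_H: "C \<in> A_H"
    and c_in_C: "c \<in> C"
    and c_maxwt: "wt c = maxwt C"
begin

private lemma subspace_C: "vec.subspace C"
  using C_A_H by (simp add: A_H_def)

private lemma dim_C: "vec.dim C = card (supp c)"
  using C_A_H c_maxwt by (simp add: A_H_def wt_eq_card_supp)

lemma eq_0_if_vanishes_on_supp_maxwt:
  assumes "d \<in> C" and "\<forall>k\<in>supp c. d $ k = 0"
  shows "d = 0"
proof (rule ccontr)
  assume "d \<noteq> 0"
  then obtain k where "d $ k \<noteq> 0"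
    by (metis vec_eq_iff zero_index)
  with assms(2) have "supp c \<subset> supp (c + d)"
    by (auto simp: supp_def)
  moreover have "c + d \<in> C"
    using subspace_C c_in_C assms(1) vec.subspace_add by blast
  ultimately show False
    using supp_not_psubset_maxwt c_maxwt by blast
qed

lemma restrict_coords_image_supp_maxwt: "restrict_coords (supp c) ` C = free_code (supp c)"
proof (rule vec.subspace_dim_equal)
  have "inj_on (restrict_coords (supp c)) C"
  proof (rule inj_onI)
    fix x y assume "x \<in> C" "y \<in> C" "restrict_coords (supp c) x = restrict_coords (supp c) y"
    then have "x - y \<in> C" and "\<forall>k\<in>supp c. (x - y) $ k = 0"
      using subspace_C vec.subspace_diff
      by (auto simp: restrict_coords_def vec_eq_iff split: if_splits)
    then show "x = y"
      using eq_0_if_vanishes_on_supp_maxwt by fastforce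
  qed
  then have "vec.dim (restrict_coords (supp c) ` C) = vec.dim C"
    using vec.dim_image_eq[OF linear_restrict_coords, of "supp c" C]
      vec.span_eq_iff[THEN iffD2, OF subspace_C] by simp
  then show "vec.dim (free_code (supp c) :: ('a ^ 'n) set) \<le> vec.dim (restrict_coords (supp c) ` C)"
    by (simp add: dim_free_code dim_C)
  show "vec.subspace (restrict_coords (supp c) ` C)"
    using linear_restrict_coords subspace_C by (rule vec.linear_subspace_image)
qed (auto simp: free_code_subspace restrict_coords_in_free_code)

lemma in_free_code_if_vanishes_on_supp_maxwt_but_one:
  assumes q: "CARD('a) \<ge> 3"
    and "e \<in> C" and e_vanishes: "\<forall>j\<in>supp c - {i}. e $ j = 0"
  shows "e \<in> free_code (supp c)"
proof (rule ccontr)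
  assume "e \<notin> free_code (supp c)"
  then obtain k where k: "k \<notin> supp c" "e $ k \<noteq> 0"
    by (auto simp: free_code_def supp_def)
  have "card {0, - c $ i / e $ i} \<le> 2"
    by (simp add: card_insert_le_m1)
  with q have "{0, - c $ i / e $ i} \<noteq> UNIV"
    by auto
  then obtain l :: 'a where l: "l \<noteq> 0" "l \<noteq> - c $ i / e $ i"
    by auto
  have "c $ i + l * e $ i \<noteq> 0" if "c $ i \<noteq> 0"
    using l(2) that by (cases "e $ i = 0") (auto simp: field_simps add_eq_0_iff)
  then have "j \<in> supp (c + l *s e)" if "j \<in> supp c" for j
    using that e_vanishes by (cases "j = i") (simp_all add: supp_def)
  moreover have "k \<in> supp (c + l *s e) - supp c"
    using k l(1) by (simp add: supp_def)
  ultimately have "supp c \<subset> supp (c + l *s e)"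
    by blast
  moreover have "c + l *s e \<in> C"
    using subspace_C c_in_C \<open>e \<in> C\<close> vec.subspace_add vec.subspace_scale by blast
  ultimately show False
    using supp_not_psubset_maxwt c_maxwt by blast
qed

lemma eq_free_code_supp_maxwt:
  assumes "CARD('a) \<ge> 3"
  shows "C = free_code (supp c)"
proof (rule vec.subspace_dim_equal[symmetric])
  have "axis i 1 \<in> C" if "i \<in> supp c" for i
  proof -
    have "axis i 1 \<in> free_code (supp c)"
      using that by (auto simp: free_code_def axis_def)
    then obtain e where e: "e \<in> C" "restrict_coords (supp c) e = axis i 1"
      using restrict_coords_image_supp_maxwt by (metis imageE)
    then have "\<forall>j\<in>supp c - {i}. e $ j = 0"
      by (auto simp: restrict_coords_def axis_def vec_eq_iff split: if_splits)
    then have "e \<in> free_code (supp c)"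
      using in_free_code_if_vanishes_on_supp_maxwt_but_one[OF assms e(1)] by blast
    with e show ?thesis
      by (simp add: restrict_coords_free_code)
  qed
  then have "vec.span ((\<lambda>i. axis i 1) ` supp c) \<subseteq> C"
    by (intro vec.span_minimal[OF _ subspace_C]) blast
  then show "free_code (supp c) \<subseteq> C"
    using free_code_subset_span_axes by (rule order_trans[rotated])
  show "vec.dim C \<le> vec.dim (free_code (supp c) :: ('a ^ 'n) set)"
    by (simp add: dim_C dim_free_code)
qed (simp_all add: subspace_C free_code_subspace)

end

theorem proposition2p6:
  fixes C :: "('a::{field,finite} ^ 'n) set" and t :: nat
  assumes "CARD('a) \<ge> 3"
    and "vec.subspace C"
    and "vec.dim C = t"
  shows "C \<in> A_H \<longleftrightarrow> (\<exists>S. C = free_code S \<and> card S = t)"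
proof
  assume C: "C \<in> A_H"
  obtain c where c: "c \<in> C" "wt c = maxwt C"
    using maxwt_attained vec.subspace_0[OF assms(2)] by blast
  have "C = free_code (supp c)"
    using eq_free_code_supp_maxwt[OF C c assms(1)] .
  moreover have "card (supp c) = t"
    using C c assms(3) by (simp add: A_H_def wt_eq_card_supp)
  ultimately show "\<exists>S. C = free_code S \<and> card S = t" by blast
next
  assume "\<exists>S. C = free_code S \<and> card S = t"
  then show "C \<in> A_H" using free_code_in_A_H by blast
qed

end
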